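(* Let $n\ge 2$. Among all pairs $T_1,T_2$ of rooted trees on leaf set $[n]$, the pairs for which the cone $K_{T_1}+K_{T_2}$ has maximal dimension are exactly those for which $T_1$ and $T_2$ are both binary and have no nontrivial common clade, i.e. $\mathrm{clade}(T_1)\cap\mathrm{clade}(T_2)=\{[n]\}$.
   Context: A rooted tree on leaf set $[n]$ has leaves labeled bijectively by $[n]$ and internal vertices each with at least two children; it is binary if every internal vertex has exactly two children. A clade of $T$ is the set of leaves below an internal vertex; $\mathrm{clade}(T)$ is the set of clades, and $[n]$ is the trivial clade. An ultrametric is $\delta\in\mathbb{R}^{\binom{[n]}{2}}$ with $\delta_{uv}\le\max\{\delta_{uw},\delta_{vw}\}$ for all distinct $u,v,w$. $K_T$ is the set of $\delta$ such that there are real weights on the internal vertices of $T$, weakly increasing along every path toward the root, with $\delta_{uv}$ equal to the weight of the most recent common ancestor of $u$ and $v$; $K_{T_1}+K_{T_2}$ is the Minkowski sum. *)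

theory Defs
  imports "HOL-Analysis.Analysis" "HOL-Library.Function_Algebras"
begin

text \<open>A rooted tree on leaf set [n] = {1..n} (internal vertices with at least two
children, up to isomorphism fixing leaf labels) is represented by its set of clades,
i.e. the leaf sets below its internal vertices. These are exactly the families H of
subsets of [n] containing [n], all of cardinality at least 2, pairwise nested or disjoint.\<close>

definition is_tree :: "nat \<Rightarrow> nat set set \<Rightarrow> bool" where
  "is_tree n H \<longleftrightarrow> {1..n} \<in> H \<and> (\<forall>C\<in>H. C \<subseteq> {1..n} \<and> 2 \<le> card C) \<and>
     (\<forall>C\<in>H. \<forall>D\<in>H. C \<subseteq> D \<or> D \<subseteq> C \<or> C \<inter> D = {})"

definition tree_vertices :: "nat \<Rightarrow> nat set set \<Rightarrow> nat set set" where
  "tree_vertices n H = H \<union> {{i} | i. i \<in> {1..n}}"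

definition children :: "nat \<Rightarrow> nat set set \<Rightarrow> nat set \<Rightarrow> nat set set" where
  "children n H C = {D \<in> tree_vertices n H. D \<subset> C \<and>
      \<not> (\<exists>E \<in> tree_vertices n H. D \<subset> E \<and> E \<subset> C)}"

definition is_binary :: "nat \<Rightarrow> nat set set \<Rightarrow> bool" where
  "is_binary n H \<longleftrightarrow> (\<forall>C\<in>H. card (children n H C) = 2)"

text \<open>Coordinates of R^(binom [n] 2): pairs (u,v) with 1 \<le> u < v \<le> n.\<close>
definition pairs :: "nat \<Rightarrow> (nat \<times> nat) set" where
  "pairs n = {(u, v). 1 \<le> u \<and> u < v \<and> v \<le> n}"

definition mrca :: "nat set set \<Rightarrow> nat \<Rightarrow> nat \<Rightarrow> nat set" where
  "mrca H u v = \<Inter> {C \<in> H. u \<in> C \<and> v \<in> C}"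

definition K :: "nat \<Rightarrow> nat set set \<Rightarrow> ((nat \<times> nat) \<Rightarrow> real) set" where
  "K n H = {\<delta>. (\<forall>p. p \<notin> pairs n \<longrightarrow> \<delta> p = 0) \<and>
     (\<exists>w :: nat set \<Rightarrow> real. (\<forall>C\<in>H. \<forall>D\<in>H. C \<subseteq> D \<longrightarrow> w C \<le> w D) \<and>
        (\<forall>(u, v) \<in> pairs n. \<delta> (u, v) = w (mrca H u v)))}"

definition minkowski_sum :: "('a \<Rightarrow> real) set \<Rightarrow> ('a \<Rightarrow> real) set \<Rightarrow> ('a \<Rightarrow> real) set" where
  "minkowski_sum A B = {(\<lambda>p. x p + y p) | x y. x \<in> A \<and> y \<in> B}"

definition cone_dim :: "('a \<Rightarrow> real) set \<Rightarrow> nat" where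
  "cone_dim S = vector_space.dim (\<lambda>(r::real) f p. r * f p) S"

definition max_pair_dim :: "nat \<Rightarrow> nat" where
  "max_pair_dim n = Max {cone_dim (minkowski_sum (K n H1) (K n H2)) | H1 H2.
                          is_tree n H1 \<and> is_tree n H2}"

end

theory Submission
  imports Defs
begin

text \<open>
  Write \<open>e\<^sub>C\<close> for the indicator of the pairs inside a clade \<open>C\<close>. Every \<open>-e\<^sub>C\<close> lies in
  \<open>K\<^sub>T\<close>, and the indicators of the pairs with most recent common ancestor \<open>C\<close> are
  triangular combinations of the \<open>e\<^sub>D\<close>, \<open>D \<subseteq> C\<close>. So \<open>K\<^sub>T\<^sub>1 + K\<^sub>T\<^sub>2\<close> spans the same space as
  the \<open>e\<^sub>C\<close> with \<open>C \<in> T\<^sub>1 \<union> T\<^sub>2\<close>, of dimension at most \<open>|T\<^sub>1| + |T\<^sub>2| - |T\<^sub>1 \<inter> T\<^sub>2| \<le> 2n - 3\<close>.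
  Here a tree has at most \<open>n - 1\<close> clades, with equality exactly when it is binary (count
  the parent-child edges), and \<open>[n]\<close> is a common clade. A caterpillar and its mirror image
  attain the bound.

  Conversely, if \<open>T\<^sub>1 \<inter> T\<^sub>2 = {[n]}\<close> the \<open>e\<^sub>C\<close> are independent. The upward partial sums of
  the coefficients of a linear relation are labellings \<open>f\<close> of \<open>T\<^sub>1\<close> and \<open>g\<close> of \<open>T\<^sub>2\<close> with
  \<open>f (mrca\<^sub>1 u v) = g (mrca\<^sub>2 u v)\<close> for all leaves \<open>u \<noteq> v\<close>. For a clade \<open>C\<close> of \<open>T\<^sub>1\<close> not in
  \<open>T\<^sub>2\<close> and the least clade \<open>D \<supset> C\<close> of \<open>T\<^sub>2\<close>, some two leaves of \<open>C\<close> have mrca \<open>C\<close> in \<open>T\<^sub>1\<close> and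
  \<open>D\<close> in \<open>T\<^sub>2\<close>, and some leaf of \<open>C\<close> has mrca \<open>D\<close> in \<open>T\<^sub>2\<close> with a leaf outside \<open>C\<close>; hence
  \<open>f C = g D = f C'\<close> for a larger clade \<open>C'\<close> of \<open>T\<^sub>1\<close>. So both labellings are constant, zero at the
  root, and Moebius inversion along the clades kills every coefficient.
\<close>

section \<open>Clades and most recent common ancestors\<close>

lemma two_le_card_distinct:
  assumes "2 \<le> card C"
  shows "\<exists>x\<in>C. \<exists>y\<in>C. x \<noteq> y"
proof -
  have "finite C"
    using assms by (intro card_ge_0_finite) simp
  moreover have "\<not> card C \<le> Suc 0"
    using assms by simp
  ultimately show ?thesis
    using card_le_Suc0_iff_eq by blast
qed

lemma mrca_mem: "u \<in> mrca T u v" "v \<in> mrca T u v"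
  unfolding mrca_def by auto

lemma mrca_least: "C \<in> T \<Longrightarrow> u \<in> C \<Longrightarrow> v \<in> C \<Longrightarrow> mrca T u v \<subseteq> C"
  unfolding mrca_def by auto

lemma mrca_commute: "mrca T u v = mrca T v u"
  unfolding mrca_def by (simp add: conj_commute)

lemma mrca_eqI: "C \<in> T \<Longrightarrow> u \<in> C \<Longrightarrow> v \<in> C \<Longrightarrow> C \<subseteq> mrca T u v \<Longrightarrow> mrca T u v = C"
  using mrca_least by blast

context
  fixes n :: nat and T :: "nat set set"
  assumes tree: "is_tree n T"
begin

lemma root_in_tree: "{1..n} \<in> T"
  using tree unfolding is_tree_def by blast

lemma clade_subset: "C \<in> T \<Longrightarrow> C \<subseteq> {1..n}"
  using tree unfolding is_tree_def by blast

lemma clade_card: "C \<in> T \<Longrightarrow> 2 \<le> card C"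
  using tree unfolding is_tree_def by blast

lemma tree_leaves_ge_2: "2 \<le> n"
  using clade_card[OF root_in_tree] by simp

lemma clade_finite: "C \<in> T \<Longrightarrow> finite C"
  using clade_subset finite_subset by blast

lemma tree_finite: "finite T"
  using clade_subset finite_subset[of T "Pow {1..n}"] by blast

lemma clades_nested: "C \<in> T \<Longrightarrow> D \<in> T \<Longrightarrow> x \<in> C \<Longrightarrow> x \<in> D \<Longrightarrow> C \<subseteq> D \<or> D \<subseteq> C"
  using tree unfolding is_tree_def by blast

lemma chain_of_clades_through:
  "F \<subseteq> T \<Longrightarrow> (\<And>C. C \<in> F \<Longrightarrow> x \<in> C) \<Longrightarrow> subset.chain T F"
  unfolding subset_chain_def using clades_nested by blast

lemma Inter_clades_containing:
  assumes "X \<subseteq> {1..n}" "X \<noteq> {}"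
  shows "\<Inter>{C \<in> T. X \<subseteq> C} \<in> T"
proof -
  let ?F = "{C \<in> T. X \<subseteq> C}"
  obtain x where "x \<in> X"
    using assms(2) by blast
  have "finite ?F"
    using tree_finite by simp
  moreover have "?F \<noteq> {}"
    using root_in_tree assms(1) by blast
  moreover have "subset.chain T ?F"
    using \<open>x \<in> X\<close> by (intro chain_of_clades_through[of _ x]) auto
  ultimately have "\<Inter>?F \<in> ?F"
    by (rule Inter_in_chain)
  then show ?thesis
    by simp
qed

lemma mrca_in_tree:
  assumes "u \<in> {1..n}" "v \<in> {1..n}"
  shows "mrca T u v \<in> T"
proof -
  have "mrca T u v = \<Inter>{C \<in> T. {u, v} \<subseteq> C}"
    unfolding mrca_def by simp
  also have "\<dots> \<in> T"
    using assms by (intro Inter_clades_containing) auto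
  finally show ?thesis .
qed

lemma mrca_ultrametric:
  assumes "u \<in> {1..n}" "v \<in> {1..n}" "w \<in> {1..n}"
  shows "mrca T u w \<subseteq> mrca T u v \<or> mrca T u w \<subseteq> mrca T v w"
proof -
  have "mrca T u v \<subseteq> mrca T v w \<or> mrca T v w \<subseteq> mrca T u v"
    using clades_nested mrca_in_tree mrca_mem assms by meson
  then show ?thesis
    using mrca_least mrca_in_tree mrca_mem assms by (meson subsetD)
qed

lemma mrca_separates_third:
  assumes D: "D \<in> T" and "u \<in> D" "v \<in> D" "z \<in> D" and uv: "mrca T u v = D"
  shows "mrca T u z = D \<or> mrca T v z = D"
proof -
  have "u \<in> {1..n}" "v \<in> {1..n}" "z \<in> {1..n}"
    using assms(2-4) clade_subset[OF D] by auto
  then have "D \<subseteq> mrca T u z \<or> D \<subseteq> mrca T z v"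
    using mrca_ultrametric[of u z v] uv by simp
  then show ?thesis
  proof
    assume "D \<subseteq> mrca T u z"
    then have "mrca T u z = D"
      by (rule mrca_eqI[OF D \<open>u \<in> D\<close> \<open>z \<in> D\<close>])
    then show ?thesis ..
  next
    assume "D \<subseteq> mrca T z v"
    then have "mrca T z v = D"
      by (rule mrca_eqI[OF D \<open>z \<in> D\<close> \<open>v \<in> D\<close>])
    then show ?thesis
      by (simp add: mrca_commute[of T z v])
  qed
qed

lemma clade_psubset_mrca:
  assumes C: "C \<in> T" and "c \<in> C" "z \<notin> C" "c \<in> {1..n}" "z \<in> {1..n}"
  shows "C \<subset> mrca T c z"
proof -
  have "C \<subseteq> mrca T c z \<or> mrca T c z \<subseteq> C"
    using clades_nested[OF C mrca_in_tree] assms(2,4,5) mrca_mem by blast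
  then show ?thesis
    using assms(3) mrca_mem[of z T c] by blast
qed

lemma least_clade_is_mrca:
  assumes D: "D \<in> T" and CD: "C \<subseteq> D" and card: "2 \<le> card C"
    and least: "\<And>E. E \<in> T \<Longrightarrow> C \<subseteq> E \<Longrightarrow> D \<subseteq> E"
  shows "\<exists>u\<in>C. \<exists>v\<in>C. u \<noteq> v \<and> mrca T u v = D"
proof -
  have leaf: "y \<in> {1..n}" if "y \<in> C" for y
    using clade_subset[OF D] CD that by blast
  obtain x where x: "x \<in> C" and others: "C - {x} \<noteq> {}"
    using two_le_card_distinct[OF card] by blast
  let ?M = "(\<lambda>v. mrca T x v) ` (C - {x})"
  have "?M \<subseteq> T"
    using leaf x mrca_in_tree by blast
  then have "subset.chain T ?M"
    by (rule chain_of_clades_through[of _ x]) (auto simp: mrca_mem)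
  moreover have "finite ?M"
    using card by (intro finite_imageI finite_Diff card_ge_0_finite) simp
  ultimately have "\<Union>?M \<in> ?M"
    using others Union_in_chain by blast
  then obtain v where "v \<in> C - {x}" and top: "\<Union>?M = mrca T x v"
    by (rule imageE)
  then have v: "v \<in> C" "x \<noteq> v"
    by auto
  have "C \<subseteq> \<Union>?M"
  proof
    fix y assume y: "y \<in> C"
    show "y \<in> \<Union>?M"
    proof (cases "y = x")
      case True
      show ?thesis
        by (rule UnionI[of "mrca T x v"]) (use \<open>v \<in> C - {x}\<close> True mrca_mem in auto)
    next
      case False
      show ?thesis
        by (rule UnionI[of "mrca T x y"]) (use y False mrca_mem in auto)
    qed
  qed
  then have "C \<subseteq> mrca T x v"
    unfolding top .
  then have "D \<subseteq> mrca T x v"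
    by (rule least[OF mrca_in_tree[OF leaf[OF x] leaf[OF v(1)]]])
  moreover have "mrca T x v \<subseteq> D"
    using mrca_least[OF D] CD x v(1) by blast
  ultimately have "mrca T x v = D"
    by (rule subset_antisym[rotated])
  then show ?thesis
    using x v by (intro bexI[of _ x] bexI[of _ v]) auto
qed

lemma leaf_in_other_child:
  assumes C: "C \<in> T" and u: "u \<in> C" and v: "v \<in> C" and uv: "mrca T u v \<noteq> C"
  shows "\<exists>w\<in>C. mrca T u w = C \<and> mrca T v w = C"
proof -
  obtain a b where ab: "a \<in> C" "b \<in> C" "mrca T a b = C"
    using least_clade_is_mrca[OF C order.refl clade_card[OF C]] by blast
  have "mrca T a u = C \<or> mrca T b u = C"
    by (rule mrca_separates_third[OF C ab(1,2) u ab(3)])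
  then have "mrca T u a = C \<or> mrca T u b = C"
    by (simp add: mrca_commute[of T u])
  then obtain w where w: "w \<in> C" "mrca T u w = C"
  proof
    assume "mrca T u a = C"
    then show thesis
      by (rule that[OF ab(1)])
  next
    assume "mrca T u b = C"
    then show thesis
      by (rule that[OF ab(2)])
  qed
  have "mrca T u v = C \<or> mrca T w v = C"
    by (rule mrca_separates_third[OF C u w(1) v w(2)])
  with uv have "mrca T v w = C"
    using mrca_commute[of T w v] by simp
  with w show ?thesis
    by blast
qed

end

section \<open>Labellings that agree through both mrca maps\<close>

lemma common_separating_pair:
  assumes T1: "is_tree n T1" and T2: "is_tree n T2"
    and C: "C \<in> T1" and D: "D \<in> T2" and CD: "C \<subseteq> D"
    and least: "\<And>E. E \<in> T2 \<Longrightarrow> C \<subseteq> E \<Longrightarrow> D \<subseteq> E"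
  shows "\<exists>u\<in>C. \<exists>v\<in>C. u \<noteq> v \<and> mrca T1 u v = C \<and> mrca T2 u v = D"
proof -
  obtain a b where ab: "a \<in> C" "b \<in> C" "a \<noteq> b" and "mrca T2 a b = D"
    using least_clade_is_mrca[OF T2 D CD clade_card[OF T1 C] least] by blast
  show ?thesis
  proof (cases "mrca T1 a b = C")
    case True
    with ab \<open>mrca T2 a b = D\<close> show ?thesis
      by (intro bexI[of _ a] bexI[of _ b]) simp_all
  next
    case False
    then obtain w where w: "w \<in> C" "mrca T1 a w = C" "mrca T1 b w = C"
      using leaf_in_other_child[OF T1 C ab(1,2)] by blast
    have "a \<noteq> w" "b \<noteq> w"
      using False w(2,3) mrca_commute[of T1 a b] by auto
    have "mrca T2 a w = D \<or> mrca T2 b w = D"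
      using ab(1,2) w(1) CD \<open>mrca T2 a b = D\<close> by (intro mrca_separates_third[OF T2 D]) auto
    then show ?thesis
    proof
      assume "mrca T2 a w = D"
      with ab(1) w(1,2) \<open>a \<noteq> w\<close> show ?thesis
        by (intro bexI[of _ a] bexI[of _ w]) simp_all
    next
      assume "mrca T2 b w = D"
      with ab(2) w(1,3) \<open>b \<noteq> w\<close> show ?thesis
        by (intro bexI[of _ b] bexI[of _ w]) simp_all
    qed
  qed
qed

lemma agreeing_label_ascends:
  assumes T1: "is_tree n T1" and T2: "is_tree n T2"
    and agree: "\<And>u v. u \<in> {1..n} \<Longrightarrow> v \<in> {1..n} \<Longrightarrow> u \<noteq> v \<Longrightarrow>
                  f (mrca T1 u v) = g (mrca T2 u v)"
    and C: "C \<in> T1" and C_new: "C \<notin> T2"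
  shows "\<exists>C'\<in>T1. C \<subset> C' \<and> f C' = f C"
proof -
  define D where "D = \<Inter>{E \<in> T2. C \<subseteq> E}"
  have D: "D \<in> T2"
    unfolding D_def using clade_subset[OF T1 C] clade_card[OF T1 C]
    by (intro Inter_clades_containing[OF T2]) auto
  have least: "D \<subseteq> E" if "E \<in> T2" "C \<subseteq> E" for E
    unfolding D_def using that by blast
  have CD: "C \<subseteq> D"
    unfolding D_def by blast
  have leaf: "x \<in> {1..n}" if "x \<in> D" for x
    using clade_subset[OF T2 D] that by blast
  obtain u v where uv: "u \<in> C" "v \<in> C" "u \<noteq> v" "mrca T1 u v = C" "mrca T2 u v = D"
    using common_separating_pair[OF T1 T2 C D CD least] by blast
  have "C \<noteq> D"
    using C_new D by blast
  with CD obtain z where z: "z \<in> D" "z \<notin> C"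
    by blast
  have "mrca T2 u z = D \<or> mrca T2 v z = D"
    using uv(1,2,5) CD z(1) by (intro mrca_separates_third[OF T2 D]) auto
  then obtain c where c: "c \<in> C" "mrca T2 c z = D"
  proof
    assume "mrca T2 u z = D"
    then show thesis
      by (rule that[OF uv(1)])
  next
    assume "mrca T2 v z = D"
    then show thesis
      by (rule that[OF uv(2)])
  qed
  have "c \<noteq> z"
    using c(1) z(2) by blast
  have in_D: "u \<in> D" "v \<in> D" "c \<in> D"
    using uv(1,2) c(1) CD by auto
  have "f (mrca T1 c z) = g D"
    using agree[OF leaf[OF in_D(3)] leaf[OF z(1)] \<open>c \<noteq> z\<close>] c(2) by simp
  also have "\<dots> = f C"
    using agree[OF leaf[OF in_D(1)] leaf[OF in_D(2)] uv(3)] uv(4,5) by simp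
  finally have label: "f (mrca T1 c z) = f C" .
  have "mrca T1 c z \<in> T1"
    using mrca_in_tree[OF T1 leaf[OF in_D(3)] leaf[OF z(1)]] .
  moreover have "C \<subset> mrca T1 c z"
    using clade_psubset_mrca[OF T1 C c(1) z(2) leaf[OF in_D(3)] leaf[OF z(1)]] .
  ultimately show ?thesis
    using label
    by (intro bexI[where x = "mrca T1 c z"] conjI) simp_all
qed

lemma agreeing_labels_constant:
  assumes T1: "is_tree n T1" and T2: "is_tree n T2" and trivial: "T1 \<inter> T2 = {{1..n}}"
    and agree: "\<And>u v. u \<in> {1..n} \<Longrightarrow> v \<in> {1..n} \<Longrightarrow> u \<noteq> v \<Longrightarrow>
                  f (mrca T1 u v) = g (mrca T2 u v)"
    and "C \<in> T1"
  shows "f C = f {1..n}"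
  using \<open>C \<in> T1\<close>
proof (induction "n - card C" arbitrary: C rule: less_induct)
  case less
  show ?case
  proof (cases "C = {1..n}")
    case True
    then show ?thesis
      by (simp only:)
  next
    case False
    then have "C \<notin> T2"
      using trivial less.prems by blast
    then obtain C' where C': "C' \<in> T1" "C \<subset> C'" "f C' = f C"
      using agreeing_label_ascends[where f = f and g = g, OF T1 T2 agree less.prems] by blast
    have "card C < card C'"
      using psubset_card_mono[OF clade_finite[OF T1 C'(1)] C'(2)] .
    moreover have "card C' \<le> n"
      using card_mono[OF _ clade_subset[OF T1 C'(1)]] by simp
    ultimately have "n - card C' < n - card C"
      by linarith
    then have "f C' = f {1..n}"
      using C'(1) by (rule less.hyps)
    with C'(3) show ?thesis
      by simp
  qed
qed

section \<open>Independence of the clade indicators\<close>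

lemma pairs_leaves: "(u, v) \<in> pairs n \<Longrightarrow> u \<in> {1..n} \<and> v \<in> {1..n}"
  unfolding pairs_def by auto

lemma pairs_or_swapped:
  "u \<in> {1..n} \<Longrightarrow> v \<in> {1..n} \<Longrightarrow> u \<noteq> v \<Longrightarrow> (u, v) \<in> pairs n \<or> (v, u) \<in> pairs n"
  unfolding pairs_def by auto

definition clade_indicator :: "nat \<Rightarrow> nat set \<Rightarrow> nat \<times> nat \<Rightarrow> real" where
  "clade_indicator n C p = (if p \<in> pairs n \<and> fst p \<in> C \<and> snd p \<in> C then 1 else 0)"

definition mrca_indicator :: "nat \<Rightarrow> nat set set \<Rightarrow> nat set \<Rightarrow> nat \<times> nat \<Rightarrow> real" where
  "mrca_indicator n T C p = (if p \<in> pairs n \<and> mrca T (fst p) (snd p) = C then 1 else 0)"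

lemma clade_indicator_mrca:
  assumes "C \<in> T"
  shows "clade_indicator n C (u, v) = (if (u, v) \<in> pairs n \<and> mrca T u v \<subseteq> C then 1 else 0)"
proof -
  have "u \<in> C \<and> v \<in> C \<longleftrightarrow> mrca T u v \<subseteq> C"
    using mrca_least[OF assms] mrca_mem[of u T v] mrca_mem[of v T u] by blast
  then show ?thesis
    unfolding clade_indicator_def by simp
qed

lemma sum_clade_indicators:
  assumes "finite A" "A \<subseteq> T" "(u, v) \<in> pairs n"
  shows "(\<Sum>C\<in>A. a C * clade_indicator n C (u, v)) = (\<Sum>C\<in>{C\<in>A. mrca T u v \<subseteq> C}. a C)"
proof -
  have "(\<Sum>C\<in>A. a C * clade_indicator n C (u, v)) = (\<Sum>C\<in>A. if mrca T u v \<subseteq> C then a C else 0)"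
  proof (rule sum.cong)
    fix C assume "C \<in> A"
    with assms(2) have "C \<in> T"
      by blast
    then show "a C * clade_indicator n C (u, v) = (if mrca T u v \<subseteq> C then a C else 0)"
      using clade_indicator_mrca[of C T n u v] assms(3) by simp
  qed simp
  also have "\<dots> = (\<Sum>C\<in>{C\<in>A. mrca T u v \<subseteq> C}. a C)"
    by (rule sum.inter_filter[OF assms(1), symmetric])
  finally show ?thesis .
qed

lemma upward_sums_zero_imp_zero:
  fixes b :: "'a::order \<Rightarrow> 'b::comm_monoid_add"
  assumes S: "finite S" and sums: "\<And>x. x \<in> S \<Longrightarrow> (\<Sum>y\<in>{y\<in>S. x \<le> y}. b y) = 0"
    and "x \<in> S"
  shows "b x = 0"
  using \<open>x \<in> S\<close>
proof (induction "card {y\<in>S. x < y}" arbitrary: x rule: less_induct)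
  case less
  have above: "b y = 0" if "y \<in> {y\<in>S. x < y}" for y
  proof -
    have "{z\<in>S. y < z} \<subset> {z\<in>S. x < z}"
      using that by auto
    then have "card {z\<in>S. y < z} < card {z\<in>S. x < z}"
      using S by (intro psubset_card_mono) auto
    with that show "b y = 0"
      using less.hyps by blast
  qed
  have "{y\<in>S. x \<le> y} = insert x {y\<in>S. x < y}"
    using less.prems by auto
  then have "(\<Sum>y\<in>{y\<in>S. x \<le> y}. b y) = b x + (\<Sum>y\<in>{y\<in>S. x < y}. b y)"
    using S by simp
  also have "(\<Sum>y\<in>{y\<in>S. x < y}. b y) = 0"
    using above by simp
  finally show "b x = 0"
    using sums[OF less.prems] by simp
qed

lemma relation_gives_agreeing_labels:
  assumes T1: "is_tree n T1" and T2: "is_tree n T2"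
    and zero: "\<And>p. p \<in> pairs n \<Longrightarrow> (\<Sum>C\<in>T1 \<union> T2. a C * clade_indicator n C p) = 0"
    and uv: "u \<in> {1..n}" "v \<in> {1..n}" "u \<noteq> v"
  shows "(\<Sum>C\<in>{C\<in>T1. mrca T1 u v \<subseteq> C}. a C) = - (\<Sum>C\<in>{C\<in>T2 - T1. mrca T2 u v \<subseteq> C}. a C)"
proof -
  have fin1: "finite T1" and fin2: "finite (T2 - T1)"
    using tree_finite[OF T1] tree_finite[OF T2] by auto
  have "(\<Sum>C\<in>{C\<in>T1. mrca T1 x y \<subseteq> C}. a C) = - (\<Sum>C\<in>{C\<in>T2 - T1. mrca T2 x y \<subseteq> C}. a C)"
    if p: "(x, y) \<in> pairs n" for x y
  proof -
    have "T1 \<union> T2 = T1 \<union> (T2 - T1)"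
      by blast
    then have "0 = (\<Sum>C\<in>T1. a C * clade_indicator n C (x, y))
                 + (\<Sum>C\<in>T2 - T1. a C * clade_indicator n C (x, y))"
      using zero[OF p] sum.union_disjoint[OF fin1 fin2] by (metis Diff_disjoint)
    also have "(\<Sum>C\<in>T1. a C * clade_indicator n C (x, y)) = (\<Sum>C\<in>{C\<in>T1. mrca T1 x y \<subseteq> C}. a C)"
      by (rule sum_clade_indicators[OF fin1 order.refl p])
    also have "(\<Sum>C\<in>T2 - T1. a C * clade_indicator n C (x, y))
        = (\<Sum>C\<in>{C\<in>T2 - T1. mrca T2 x y \<subseteq> C}. a C)"
      by (rule sum_clade_indicators[OF fin2 Diff_subset p])
    finally show ?thesis
      by simp
  qed
  note pair = this
  from pairs_or_swapped[OF uv] show ?thesis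
  proof
    assume "(u, v) \<in> pairs n"
    then show ?thesis
      by (rule pair)
  next
    assume "(v, u) \<in> pairs n"
    from pair[OF this] show ?thesis
      by (simp add: mrca_commute[of _ v u])
  qed
qed

theorem clade_indicators_independent:
  assumes T1: "is_tree n T1" and T2: "is_tree n T2" and trivial: "T1 \<inter> T2 = {{1..n}}"
    and zero: "\<And>p. p \<in> pairs n \<Longrightarrow> (\<Sum>C\<in>T1 \<union> T2. a C * clade_indicator n C p) = 0"
    and C: "C \<in> T1 \<union> T2"
  shows "a C = 0"
proof -
  define f where "f E = (\<Sum>C\<in>{C\<in>T1. E \<subseteq> C}. a C)" for E
  define g where "g E = - (\<Sum>C\<in>{C\<in>T2 - T1. E \<subseteq> C}. a C)" for E
  have agree: "f (mrca T1 u v) = g (mrca T2 u v)"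
    if "u \<in> {1..n}" "v \<in> {1..n}" "u \<noteq> v" for u v
    unfolding f_def g_def by (rule relation_gives_agreeing_labels[OF T1 T2 zero that])
  have f_const: "f E = f {1..n}" if "E \<in> T1" for E
    using agreeing_labels_constant[where f = f and g = g, OF T1 T2 trivial agree that] .
  have g_const: "g E = g {1..n}" if "E \<in> T2" for E
    using agreeing_labels_constant[where f = g and g = f, OF T2 T1 _ agree[symmetric] that]
      trivial by blast
  have "E = {1..n}" if "E \<in> T2" "{1..n} \<subseteq> E" for E
    using clade_subset[OF T2 that(1)] that(2) by (rule subset_antisym)
  then have nothing_above_root: "{C\<in>T2 - T1. {1..n} \<subseteq> C} = {}"
    using root_in_tree[OF T1] by blast
  have g_root: "g {1..n} = 0"
    unfolding g_def nothing_above_root by simp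
  have leaves: "1 \<in> {1..n}" "2 \<in> {1..n}" "(1::nat) \<noteq> 2"
    using tree_leaves_ge_2[OF T1] by auto
  have "f {1..n} = f (mrca T1 1 2)"
    using f_const[OF mrca_in_tree[OF T1 leaves(1,2)]] by simp
  also have "\<dots> = g (mrca T2 1 2)"
    by (rule agree[OF leaves])
  also have "\<dots> = g {1..n}"
    by (rule g_const[OF mrca_in_tree[OF T2 leaves(1,2)]])
  also have "\<dots> = 0"
    by (rule g_root)
  finally have f_root: "f {1..n} = 0" .
  show ?thesis
  proof (cases "C \<in> T1")
    case True
    show ?thesis
      by (rule upward_sums_zero_imp_zero[OF tree_finite[OF T1] _ True])
        (use f_const f_root in \<open>simp add: f_def\<close>)
  next
    case False
    with C have "C \<in> T2 - T1"
      by blast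
    have "finite (T2 - T1)"
      using tree_finite[OF T2] by simp
    then show ?thesis
      by (rule upward_sums_zero_imp_zero[OF _ _ \<open>C \<in> T2 - T1\<close>])
        (use g_const g_root in \<open>simp add: g_def\<close>)
  qed
qed

section \<open>The span of the Minkowski sum\<close>

interpretation real_fun: vector_space "\<lambda>(r::real) (f :: 'a \<Rightarrow> real) p. r * f p"
  by unfold_locales (auto simp: fun_eq_iff algebra_simps)

lemma sum_fun_apply: "(\<Sum>x\<in>A. f x) p = (\<Sum>x\<in>A. f x p)"
  by (induction A rule: infinite_finite_induct) auto

lemma clade_indicator_eq_sum:
  assumes T: "is_tree n T" and C: "C \<in> T"
  shows "clade_indicator n C = (\<Sum>D\<in>{D\<in>T. D \<subseteq> C}. mrca_indicator n T D)"
proof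
  fix p :: "nat \<times> nat"
  obtain u v where p: "p = (u, v)"
    by (cases p)
  have fin: "finite {D\<in>T. D \<subseteq> C}"
    using tree_finite[OF T] by simp
  show "clade_indicator n C p = (\<Sum>D\<in>{D\<in>T. D \<subseteq> C}. mrca_indicator n T D) p"
  proof (cases "p \<in> pairs n")
    case False
    then show ?thesis
      unfolding sum_fun_apply by (simp add: clade_indicator_def mrca_indicator_def)
  next
    case True
    have "(\<Sum>D\<in>{D\<in>T. D \<subseteq> C}. mrca_indicator n T D p)
        = (\<Sum>D\<in>{D\<in>T. D \<subseteq> C}. if mrca T u v = D then 1 else 0)"
      using True p by (simp add: mrca_indicator_def)
    also have "\<dots> = (if mrca T u v \<in> {D\<in>T. D \<subseteq> C} then 1 else 0)"
      by (rule sum.delta'[OF fin])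
    also have "\<dots> = clade_indicator n C p"
      using mrca_in_tree[OF T] pairs_leaves[of u v n] True p clade_indicator_mrca[OF C] by simp
    finally show ?thesis
      unfolding sum_fun_apply ..
  qed
qed

lemma mrca_indicator_in_span:
  assumes T: "is_tree n T"
  shows "C \<in> T \<Longrightarrow> mrca_indicator n T C \<in> real_fun.span (clade_indicator n ` T)"
proof (induction C rule: measure_induct_rule[where f = card])
  case (less C)
  have below: "mrca_indicator n T D \<in> real_fun.span (clade_indicator n ` T)"
    if "D \<in> {D\<in>T. D \<subset> C}" for D
  proof -
    from that have "D \<in> T" "D \<subset> C"
      by auto
    show ?thesis
      by (rule less.IH[OF psubset_card_mono[OF clade_finite[OF T less.prems] \<open>D \<subset> C\<close>]
            \<open>D \<in> T\<close>])
  qed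
  have "{D\<in>T. D \<subseteq> C} = insert C {D\<in>T. D \<subset> C}"
    using less.prems by auto
  then have "mrca_indicator n T C
      = clade_indicator n C - (\<Sum>D\<in>{D\<in>T. D \<subset> C}. mrca_indicator n T D)"
    using clade_indicator_eq_sum[OF T less.prems] tree_finite[OF T] by simp
  also have "\<dots> \<in> real_fun.span (clade_indicator n ` T)"
  proof (rule real_fun.span_diff)
    show "clade_indicator n C \<in> real_fun.span (clade_indicator n ` T)"
      using less.prems by (intro real_fun.span_base imageI)
    show "(\<Sum>D\<in>{D\<in>T. D \<subset> C}. mrca_indicator n T D) \<in> real_fun.span (clade_indicator n ` T)"
      using below by (rule real_fun.span_sum)
  qed
  finally show ?case .
qed

lemma sum_mrca_indicators:
  assumes T: "is_tree n T"
  shows "(\<Sum>C\<in>T. w C * mrca_indicator n T C (u, v))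
       = (if (u, v) \<in> pairs n then w (mrca T u v) else 0)"
proof (cases "(u, v) \<in> pairs n")
  case True
  have "(\<Sum>C\<in>T. w C * mrca_indicator n T C (u, v)) = (\<Sum>C\<in>T. if mrca T u v = C then w C else 0)"
    using True by (intro sum.cong) (auto simp: mrca_indicator_def)
  also have "\<dots> = w (mrca T u v)"
  proof -
    have "mrca T u v \<in> T"
      using pairs_leaves[OF True] by (intro mrca_in_tree[OF T]) auto
    then show ?thesis
      using sum.delta'[OF tree_finite[OF T], of "mrca T u v" w] by simp
  qed
  finally show ?thesis
    using True by simp
qed (simp add: mrca_indicator_def)

lemma K_subset_span:
  assumes T: "is_tree n T"
  shows "K n T \<subseteq> real_fun.span (clade_indicator n ` T)"
proof
  fix x assume "x \<in> K n T"
  then have outside: "\<And>p. p \<notin> pairs n \<Longrightarrow> x p = 0"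
      and "\<exists>w. \<forall>(u, v)\<in>pairs n. x (u, v) = w (mrca T u v)"
    unfolding K_def by blast+
  then obtain w where weights: "\<forall>(u, v)\<in>pairs n. x (u, v) = w (mrca T u v)"
    by blast
  have "x = (\<Sum>C\<in>T. (\<lambda>p. w C * mrca_indicator n T C p))"
  proof
    fix p :: "nat \<times> nat"
    show "x p = (\<Sum>C\<in>T. (\<lambda>p. w C * mrca_indicator n T C p)) p"
      unfolding sum_fun_apply using outside weights
      by (cases p) (auto simp: sum_mrca_indicators[OF T])
  qed
  also have "\<dots> \<in> real_fun.span (clade_indicator n ` T)"
    by (intro real_fun.span_sum real_fun.span_scale mrca_indicator_in_span[OF T])
  finally show "x \<in> real_fun.span (clade_indicator n ` T)" .
qed

lemma zero_in_K: "(\<lambda>p. 0) \<in> K n T"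
  unfolding K_def by (intro CollectI conjI exI[of _ "\<lambda>_. 0"]) auto

lemma uminus_clade_indicator_in_K:
  assumes "C \<in> T"
  shows "(\<lambda>p. - clade_indicator n C p) \<in> K n T"
  unfolding K_def
proof (intro CollectI conjI exI[of _ "\<lambda>D. if D \<subseteq> C then -1 else 0"])
  show "\<forall>p. p \<notin> pairs n \<longrightarrow> - clade_indicator n C p = 0"
    by (simp add: clade_indicator_def)
  show "\<forall>D\<in>T. \<forall>E\<in>T. D \<subseteq> E \<longrightarrow>
      (if D \<subseteq> C then -1 else 0) \<le> (if E \<subseteq> C then (-1::real) else 0)"
    by auto
  show "\<forall>(u, v)\<in>pairs n. - clade_indicator n C (u, v) = (if mrca T u v \<subseteq> C then -1 else 0)"
    by (auto simp: clade_indicator_mrca[OF assms])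
qed

lemma minkowski_sumI: "x \<in> A \<Longrightarrow> y \<in> B \<Longrightarrow> (\<lambda>p. x p + y p) \<in> minkowski_sum A B"
  unfolding minkowski_sum_def by blast

lemma minkowski_sum_K_subset_span:
  assumes T1: "is_tree n T1" and T2: "is_tree n T2"
  shows "minkowski_sum (K n T1) (K n T2) \<subseteq> real_fun.span (clade_indicator n ` (T1 \<union> T2))"
proof
  fix z assume "z \<in> minkowski_sum (K n T1) (K n T2)"
  then obtain x y where z: "z = x + y" and "x \<in> K n T1" "y \<in> K n T2"
    unfolding minkowski_sum_def plus_fun_def by blast
  then have "x \<in> real_fun.span (clade_indicator n ` (T1 \<union> T2))"
      "y \<in> real_fun.span (clade_indicator n ` (T1 \<union> T2))"
    using K_subset_span[OF T1] K_subset_span[OF T2]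
      real_fun.span_mono[of "clade_indicator n ` T1" "clade_indicator n ` (T1 \<union> T2)"]
      real_fun.span_mono[of "clade_indicator n ` T2" "clade_indicator n ` (T1 \<union> T2)"]
    by auto
  then show "z \<in> real_fun.span (clade_indicator n ` (T1 \<union> T2))"
    unfolding z by (rule real_fun.span_add)
qed

lemma clade_indicator_in_span_minkowski_sum:
  assumes C: "C \<in> T1 \<union> T2"
  shows "clade_indicator n C \<in> real_fun.span (minkowski_sum (K n T1) (K n T2))"
proof -
  have "(\<lambda>p. - clade_indicator n C p) \<in> minkowski_sum (K n T1) (K n T2)"
  proof (cases "C \<in> T1")
    case True
    show ?thesis
      using minkowski_sumI[OF uminus_clade_indicator_in_K[OF True] zero_in_K] by simp
  next
    case False
    with C have "C \<in> T2"
      by blast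
    show ?thesis
      using minkowski_sumI[OF zero_in_K uminus_clade_indicator_in_K[OF \<open>C \<in> T2\<close>]] by simp
  qed
  then have "(\<lambda>p. (-1) * (- clade_indicator n C p))
      \<in> real_fun.span (minkowski_sum (K n T1) (K n T2))"
    by (intro real_fun.span_scale real_fun.span_base)
  then show ?thesis
    by simp
qed

lemma span_minkowski_sum_K:
  assumes "is_tree n T1" "is_tree n T2"
  shows "real_fun.span (minkowski_sum (K n T1) (K n T2))
       = real_fun.span (clade_indicator n ` (T1 \<union> T2))"
  using minkowski_sum_K_subset_span[OF assms] clade_indicator_in_span_minkowski_sum
  by (auto simp: real_fun.span_eq)

lemma cone_dim_minkowski_sum_K:
  assumes "is_tree n T1" "is_tree n T2"
  shows "cone_dim (minkowski_sum (K n T1) (K n T2)) = real_fun.dim (clade_indicator n ` (T1 \<union> T2))"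
  unfolding cone_dim_def
  by (metis real_fun.dim_span span_minkowski_sum_K[OF assms])

lemma clade_indicator_subset:
  assumes C: "C \<subseteq> {1..n}" "2 \<le> card C" and eq: "clade_indicator n C = clade_indicator n D"
  shows "C \<subseteq> D"
proof
  fix x assume x: "x \<in> C"
  obtain y where y: "y \<in> C" "y \<noteq> x"
    using two_le_card_distinct[OF C(2)] x by metis
  let ?p = "(min x y, max x y)"
  have "?p \<in> pairs n"
    using x y C(1) unfolding pairs_def by auto
  moreover have "min x y \<in> C" "max x y \<in> C"
    using x y(1) by (auto simp: min_def max_def)
  ultimately have "clade_indicator n D ?p = 1"
    unfolding eq[symmetric] clade_indicator_def by simp
  then have "min x y \<in> D" "max x y \<in> D"
    unfolding clade_indicator_def by (auto split: if_splits)
  then show "x \<in> D"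
    by (cases "x \<le> y") (auto simp: min_def max_def)
qed

lemma inj_on_clade_indicator:
  assumes T1: "is_tree n T1" and T2: "is_tree n T2"
  shows "inj_on (clade_indicator n) (T1 \<union> T2)"
proof (rule inj_onI)
  have clade: "E \<subseteq> {1..n} \<and> 2 \<le> card E" if "E \<in> T1 \<union> T2" for E
  proof (cases "E \<in> T1")
    case True
    then show ?thesis
      using clade_subset[OF T1] clade_card[OF T1] by simp
  next
    case False
    with that have "E \<in> T2"
      by simp
    then show ?thesis
      using clade_subset[OF T2] clade_card[OF T2] by simp
  qed
  fix C D assume "C \<in> T1 \<union> T2" "D \<in> T1 \<union> T2" and eq: "clade_indicator n C = clade_indicator n D"
  from clade[OF \<open>C \<in> T1 \<union> T2\<close>] clade[OF \<open>D \<in> T1 \<union> T2\<close>]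
  have "C \<subseteq> {1..n}" "2 \<le> card C" "D \<subseteq> {1..n}" "2 \<le> card D"
    by simp_all
  show "C = D"
  proof (rule subset_antisym)
    show "C \<subseteq> D"
      using \<open>C \<subseteq> {1..n}\<close> \<open>2 \<le> card C\<close> eq by (rule clade_indicator_subset)
    show "D \<subseteq> C"
      using \<open>D \<subseteq> {1..n}\<close> \<open>2 \<le> card D\<close> eq[symmetric] by (rule clade_indicator_subset)
  qed
qed

lemma dim_clade_indicators_le:
  assumes "finite U"
  shows "real_fun.dim (clade_indicator n ` U) \<le> card U"
proof -
  have "real_fun.dim (clade_indicator n ` U) \<le> card (clade_indicator n ` U)"
    using assms by (intro real_fun.dim_le_card real_fun.span_superset finite_imageI)
  also have "\<dots> \<le> card U"
    using assms by (rule card_image_le)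
  finally show ?thesis .
qed

lemma dim_clade_indicators_eq_card:
  assumes T1: "is_tree n T1" and T2: "is_tree n T2" and trivial: "T1 \<inter> T2 = {{1..n}}"
  shows "real_fun.dim (clade_indicator n ` (T1 \<union> T2)) = card (T1 \<union> T2)"
proof -
  let ?U = "T1 \<union> T2"
  have fin: "finite ?U"
    using tree_finite[OF T1] tree_finite[OF T2] by simp
  have inj: "inj_on (clade_indicator n) ?U"
    using inj_on_clade_indicator[OF T1 T2] .
  have "\<not> real_fun.dependent (clade_indicator n ` ?U)"
  proof
    assume "real_fun.dependent (clade_indicator n ` ?U)"
    then obtain c where nonzero: "\<exists>e\<in>clade_indicator n ` ?U. c e \<noteq> 0"
        and comb: "(\<Sum>e\<in>clade_indicator n ` ?U. (\<lambda>p. c e * e p)) = 0"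
      using real_fun.dependent_finite[of "clade_indicator n ` ?U"] fin by auto
    have comb': "(\<Sum>C\<in>?U. (\<lambda>p. c (clade_indicator n C) * clade_indicator n C p)) = 0"
      using comb sum.reindex[OF inj, of "\<lambda>e. (\<lambda>p. c e * e p)"] by (simp add: comp_def)
    have "(\<Sum>C\<in>?U. c (clade_indicator n C) * clade_indicator n C p) = 0" for p
      using fun_cong[OF comb', of p] unfolding sum_fun_apply by simp
    then have "c (clade_indicator n C) = 0" if "C \<in> ?U" for C
      by (rule clade_indicators_independent[OF T1 T2 trivial _ that])
    with nonzero show False
      by (auto simp: image_iff)
  qed
  then have "real_fun.dim (clade_indicator n ` ?U) = card (clade_indicator n ` ?U)"
    by (rule real_fun.dim_eq_card_independent)
  also have "\<dots> = card ?U"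
    using card_image[OF inj] .
  finally show ?thesis .
qed

section \<open>Number of clades\<close>

context
  fixes n :: nat and T :: "nat set set"
  assumes tree: "is_tree n T"
begin

lemma finite_vertices: "finite (tree_vertices n T)"
  unfolding tree_vertices_def using tree_finite[OF tree] by simp

lemma vertex_cases: "D \<in> tree_vertices n T \<Longrightarrow> D \<in> T \<or> (\<exists>i\<in>{1..n}. D = {i})"
  unfolding tree_vertices_def by blast

lemma vertex_subset: "D \<in> tree_vertices n T \<Longrightarrow> D \<subseteq> {1..n}"
  using vertex_cases clade_subset[OF tree] by blast

lemma vertex_nonempty: "D \<in> tree_vertices n T \<Longrightarrow> D \<noteq> {}"
  using vertex_cases clade_card[OF tree] by fastforce

lemma card_vertices: "card (tree_vertices n T) = card T + n"
proof -
  have "{{i} | i. i \<in> {1..n}} = (\<lambda>i. {i}) ` {1..n}"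
    by auto
  then have leaves: "card {{i} | i. i \<in> {1..n}} = n"
    by (simp add: card_image)
  have "T \<inter> {{i} | i. i \<in> {1..n}} = {}"
    using clade_card[OF tree] by fastforce
  then show ?thesis
    unfolding tree_vertices_def using tree_finite[OF tree] leaves by (simp add: card_Un_disjoint)
qed

lemma child_parent_unique:
  assumes C: "C \<in> T" and C': "C' \<in> T"
    and D: "D \<in> children n T C" and D': "D \<in> children n T C'"
  shows "C = C'"
proof (rule ccontr)
  assume "C \<noteq> C'"
  have "D \<in> tree_vertices n T" "D \<subset> C" "D \<subset> C'"
    using D D' unfolding children_def by auto
  moreover obtain x where "x \<in> D"
    using vertex_nonempty \<open>D \<in> tree_vertices n T\<close> by blast
  ultimately have "C \<subset> C' \<or> C' \<subset> C"
    using clades_nested[OF tree C C', of x] \<open>C \<noteq> C'\<close> by blast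
  moreover have "C \<in> tree_vertices n T" "C' \<in> tree_vertices n T"
    using C C' unfolding tree_vertices_def by auto
  ultimately show False
    using D D' \<open>D \<subset> C\<close> \<open>D \<subset> C'\<close> unfolding children_def by blast
qed

lemma exists_child_above:
  assumes X: "X \<in> tree_vertices n T" "X \<subset> C"
  shows "\<exists>D\<in>children n T C. X \<subseteq> D"
proof -
  let ?F = "{E \<in> tree_vertices n T. X \<subseteq> E \<and> E \<subset> C}"
  have "finite ?F" "?F \<noteq> {}"
    using finite_vertices X by auto
  then obtain M where M: "M \<in> ?F" and maximal: "\<And>E. E \<in> ?F \<Longrightarrow> M \<subseteq> E \<Longrightarrow> M = E"
    using finite_has_maximal by meson
  have "M \<in> children n T C"
    unfolding children_def using M maximal by blast
  with M show ?thesis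
    by blast
qed

lemma two_le_card_children:
  assumes C: "C \<in> T"
  shows "2 \<le> card (children n T C)"
proof (rule ccontr)
  have child_of_leaf: "\<exists>D\<in>children n T C. i \<in> D" if "i \<in> C" for i
  proof -
    have "{i} \<noteq> C"
      using clade_card[OF tree C] by auto
    with that have "{i} \<subset> C"
      by blast
    moreover have "{i} \<in> tree_vertices n T"
      using that clade_subset[OF tree C] unfolding tree_vertices_def by blast
    ultimately show ?thesis
      using exists_child_above by blast
  qed
  have "finite (children n T C)"
    using finite_vertices unfolding children_def by simp
  moreover assume "\<not> 2 \<le> card (children n T C)"
  ultimately have single: "D = D'" if "D \<in> children n T C" "D' \<in> children n T C" for D D'
    using card_le_Suc0_iff_eq that by fastforce
  obtain x where "x \<in> C"
    using two_le_card_distinct[OF clade_card[OF tree C]] by blast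
  then obtain D where D: "D \<in> children n T C"
    using child_of_leaf by blast
  have "C \<subseteq> D"
    using child_of_leaf single[OF D] by blast
  moreover have "D \<subset> C"
    using D unfolding children_def by blast
  ultimately show False
    by blast
qed

lemma children_cover_non_root:
  "(\<Union>C\<in>T. children n T C) = tree_vertices n T - {{1..n}}"
proof
  show "(\<Union>C\<in>T. children n T C) \<subseteq> tree_vertices n T - {{1..n}}"
    using clade_subset[OF tree] unfolding children_def by blast
next
  show "tree_vertices n T - {{1..n}} \<subseteq> (\<Union>C\<in>T. children n T C)"
  proof
    fix D assume "D \<in> tree_vertices n T - {{1..n}}"
    then have D: "D \<in> tree_vertices n T" "D \<subset> {1..n}"
      using vertex_subset by auto
    let ?F = "{E \<in> T. D \<subset> E}"
    have "finite ?F" "?F \<noteq> {}"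
      using tree_finite[OF tree] root_in_tree[OF tree] D(2) by auto
    then obtain P where P: "P \<in> ?F" and minimal: "\<And>E. E \<in> ?F \<Longrightarrow> E \<subseteq> P \<Longrightarrow> P = E"
      using finite_has_minimal by meson
    have "\<not> (\<exists>E\<in>tree_vertices n T. D \<subset> E \<and> E \<subset> P)"
    proof
      assume "\<exists>E\<in>tree_vertices n T. D \<subset> E \<and> E \<subset> P"
      then obtain E where E: "E \<in> tree_vertices n T" "D \<subset> E" "E \<subset> P"
        by blast
      show False
        using vertex_cases[OF E(1)]
      proof
        assume "E \<in> T"
        then show False
          using minimal[of E] E(2,3) by blast
      next
        assume "\<exists>i\<in>{1..n}. E = {i}"
        then show False
          using E(2) vertex_nonempty[OF D(1)] by blast
      qed
    qed
    then have "D \<in> children n T P"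
      unfolding children_def using D(1) P by blast
    with P show "D \<in> (\<Union>C\<in>T. children n T C)"
      by blast
  qed
qed

lemma sum_card_children: "(\<Sum>C\<in>T. card (children n T C)) = card T + n - 1"
proof -
  have "(\<Sum>C\<in>T. card (children n T C)) = card (\<Union>C\<in>T. children n T C)"
    using tree_finite[OF tree] finite_vertices child_parent_unique
    by (intro card_UN_disjoint[symmetric]) (auto simp: children_def)
  also have "\<dots> = card (tree_vertices n T) - 1"
    unfolding children_cover_non_root
    using finite_vertices root_in_tree[OF tree] by (simp add: tree_vertices_def)
  finally show ?thesis
    using card_vertices by simp
qed

lemma card_tree_le: "card T \<le> n - 1"
proof -
  have "(\<Sum>C\<in>T. 2) \<le> (\<Sum>C\<in>T. card (children n T C))"
    using two_le_card_children by (rule sum_mono)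
  then show ?thesis
    using sum_card_children by simp
qed

lemma is_binary_iff_card: "is_binary n T \<longleftrightarrow> card T = n - 1"
proof
  assume "is_binary n T"
  then have "(\<Sum>C\<in>T. card (children n T C)) = (\<Sum>C\<in>T. 2)"
    unfolding is_binary_def by simp
  then show "card T = n - 1"
    using sum_card_children by simp
next
  assume "card T = n - 1"
  then have "(\<Sum>C\<in>T. 2) = (\<Sum>C\<in>T. card (children n T C))"
    using sum_card_children tree_leaves_ge_2[OF tree] by simp
  show "is_binary n T"
    unfolding is_binary_def
  proof
    fix C assume "C \<in> T"
    show "card (children n T C) = 2"
      by (rule sum_mono_inv[OF \<open>(\<Sum>C\<in>T. 2) = (\<Sum>C\<in>T. card (children n T C))\<close>
            two_le_card_children \<open>C \<in> T\<close> tree_finite[OF tree], symmetric])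
  qed
qed

end

section \<open>The maximal dimension\<close>

lemma cone_dim_le_card_union:
  assumes "is_tree n T1" "is_tree n T2"
  shows "cone_dim (minkowski_sum (K n T1) (K n T2)) \<le> card (T1 \<union> T2)"
  unfolding cone_dim_minkowski_sum_K[OF assms]
  using tree_finite[OF assms(1)] tree_finite[OF assms(2)] by (intro dim_clade_indicators_le) simp

lemma card_union_trees:
  assumes T1: "is_tree n T1" and T2: "is_tree n T2"
  shows "card (T1 \<union> T2) = card T1 + card T2 - card (T1 \<inter> T2)" and "1 \<le> card (T1 \<inter> T2)"
proof -
  have fin: "finite T1" "finite T2" "finite (T1 \<inter> T2)"
    using tree_finite[OF T1] tree_finite[OF T2] by auto
  then show "card (T1 \<union> T2) = card T1 + card T2 - card (T1 \<inter> T2)"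
    using card_Un_Int[of T1 T2] by simp
  have "{1..n} \<in> T1 \<inter> T2"
    using root_in_tree[OF T1] root_in_tree[OF T2] by blast
  with fin(3) show "1 \<le> card (T1 \<inter> T2)"
    by (metis Suc_leI card_gt_0_iff empty_iff One_nat_def)
qed

definition caterpillar :: "nat \<Rightarrow> nat set set" where
  "caterpillar n = (\<lambda>k. {1..k}) ` {2..n}"

definition reversed_caterpillar :: "nat \<Rightarrow> nat set set" where
  "reversed_caterpillar n = (\<lambda>k. {k..n}) ` {1..n - 1}"

lemma is_tree_caterpillar: "2 \<le> n \<Longrightarrow> is_tree n (caterpillar n)"
  unfolding is_tree_def caterpillar_def by (auto simp: nat_le_linear)

lemma is_tree_reversed_caterpillar: "2 \<le> n \<Longrightarrow> is_tree n (reversed_caterpillar n)"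
  unfolding is_tree_def reversed_caterpillar_def by (auto simp: nat_le_linear)

lemma card_caterpillar: "card (caterpillar n) = n - 1"
proof -
  have "inj_on (\<lambda>k. {1..k::nat}) {2..n}"
    by (auto simp: inj_on_def)
  then show ?thesis
    unfolding caterpillar_def by (simp add: card_image)
qed

lemma card_reversed_caterpillar: "card (reversed_caterpillar n) = n - 1"
proof -
  have "inj_on (\<lambda>k. {k..n::nat}) {1..n - 1}"
    by (auto simp: inj_on_def)
  then show ?thesis
    unfolding reversed_caterpillar_def by (simp add: card_image)
qed

lemma caterpillars_trivial_intersection:
  assumes "2 \<le> n"
  shows "caterpillar n \<inter> reversed_caterpillar n = {{1..n}}"
proof
  show "{{1..n}} \<subseteq> caterpillar n \<inter> reversed_caterpillar n"
    using assms unfolding caterpillar_def reversed_caterpillar_def by auto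
  show "caterpillar n \<inter> reversed_caterpillar n \<subseteq> {{1..n}}"
  proof
    fix X assume "X \<in> caterpillar n \<inter> reversed_caterpillar n"
    then obtain k j where X: "X = {1..k}" "2 \<le> k" "X = {j..n}" "1 \<le> j"
      unfolding caterpillar_def reversed_caterpillar_def by auto
    then have "1 \<in> {j..n}"
      by auto
    with X show "X \<in> {{1..n}}"
      by auto
  qed
qed

lemma max_pair_dim_eq:
  assumes n: "2 \<le> n"
  shows "max_pair_dim n = 2 * n - 3"
proof -
  let ?S = "{cone_dim (minkowski_sum (K n H1) (K n H2)) | H1 H2. is_tree n H1 \<and> is_tree n H2}"
  have bound: "d \<le> 2 * n - 3" if "d \<in> ?S" for d
  proof -
    from that obtain T1 T2 where T: "is_tree n T1" "is_tree n T2"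
      and d: "d = cone_dim (minkowski_sum (K n T1) (K n T2))"
      by blast
    show ?thesis
      using cone_dim_le_card_union[OF T] card_union_trees[OF T]
        card_tree_le[OF T(1)] card_tree_le[OF T(2)] d n by linarith
  qed
  then have "finite ?S"
    by (meson finite_atMost finite_subset atMost_iff subsetI)
  let ?L = "caterpillar n" and ?R = "reversed_caterpillar n"
  have trees: "is_tree n ?L" "is_tree n ?R"
    using is_tree_caterpillar[OF n] is_tree_reversed_caterpillar[OF n] .
  have "cone_dim (minkowski_sum (K n ?L) (K n ?R)) = card (?L \<union> ?R)"
    using cone_dim_minkowski_sum_K[OF trees]
      dim_clade_indicators_eq_card[OF trees caterpillars_trivial_intersection[OF n]] by simp
  also have "\<dots> = 2 * n - 3"
    using card_union_trees(1)[OF trees] caterpillars_trivial_intersection[OF n]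
      card_caterpillar card_reversed_caterpillar n by simp
  finally have "2 * n - 3 \<in> ?S"
    using trees by (intro CollectI exI[of _ ?L] exI[of _ ?R]) simp
  then show ?thesis
    unfolding max_pair_dim_def using Max_eqI[OF \<open>finite ?S\<close> bound] by blast
qed

theorem corollary3p8:
  fixes n :: nat and T1 T2 :: "nat set set"
  assumes "n \<ge> 2" and "is_tree n T1" and "is_tree n T2"
  shows "cone_dim (minkowski_sum (K n T1) (K n T2)) = max_pair_dim n \<longleftrightarrow>
           is_binary n T1 \<and> is_binary n T2 \<and> T1 \<inter> T2 = {{1..n}}"
proof -
  note n = assms(1) and T = assms(2,3)
  have "{1..n} \<in> T1 \<inter> T2"
    using root_in_tree[OF T(1)] root_in_tree[OF T(2)] by blast
  then have common_root: "card (T1 \<inter> T2) = 1 \<longleftrightarrow> T1 \<inter> T2 = {{1..n}}"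
    by (auto simp: card_1_singleton_iff)
  note binary_iff = is_binary_iff_card[OF T(1)] is_binary_iff_card[OF T(2)]
  note card_bounds = card_union_trees[OF T] card_tree_le[OF T(1)] card_tree_le[OF T(2)]
  show ?thesis
  proof
    assume "cone_dim (minkowski_sum (K n T1) (K n T2)) = max_pair_dim n"
    then have "2 * n - 3 \<le> card (T1 \<union> T2)"
      using cone_dim_le_card_union[OF T] max_pair_dim_eq[OF n] by simp
    then have "card T1 = n - 1" "card T2 = n - 1" "card (T1 \<inter> T2) = 1"
      using card_bounds n by linarith+
    then show "is_binary n T1 \<and> is_binary n T2 \<and> T1 \<inter> T2 = {{1..n}}"
      using binary_iff common_root by simp
  next
    assume binary_trivial: "is_binary n T1 \<and> is_binary n T2 \<and> T1 \<inter> T2 = {{1..n}}"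
    then have "card T1 = n - 1" "card T2 = n - 1" "card (T1 \<inter> T2) = 1"
      using binary_iff by simp_all
    have "cone_dim (minkowski_sum (K n T1) (K n T2)) = card (T1 \<union> T2)"
      using cone_dim_minkowski_sum_K[OF T] dim_clade_indicators_eq_card[OF T] binary_trivial
      by simp
    also have "\<dots> = 2 * n - 3"
      using card_bounds(1) \<open>card T1 = n - 1\<close> \<open>card T2 = n - 1\<close> \<open>card (T1 \<inter> T2) = 1\<close> n
      by linarith
    finally show "cone_dim (minkowski_sum (K n T1) (K n T2)) = max_pair_dim n"
      using max_pair_dim_eq[OF n] by simp
  qed
qed

end
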